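(* Let $k\ge2$, $n\ge1$ be integers, let $\bar{\mathcal{P}}\in\mathbb{R}^{[k,n]}$ be a columnwise-substochastic tensor, $\mathbf{v}\in\mathbb{R}^n$ a stochastic vector and $\alpha\in[0,1)$. If $\alpha<\frac{1}{k-1}$, then the MLPPR system $(\mathbf{e}^T\mathbf{y})^{k-2}\mathbf{y}-\alpha\bar{\mathcal{P}}\mathbf{y}^{k-1}=\mathbf{v}$ has a unique nonnegative solution $\mathbf{y}\in\mathbb{R}^n_+$.
   Context: For $\mathcal{P}\in\mathbb{R}^{[k,n]}$ (real tensors of order $k$, dimension $n$) and $\mathbf{y}\in\mathbb{R}^n$, $(\mathcal{P}\mathbf{y}^{k-1})_i=\sum_{i_2,\dots,i_k}p_{i i_2\dots i_k}y_{i_2}\cdots y_{i_k}$. $\bar{\mathcal{P}}$ is columnwise-substochastic if its entries are nonnegative and $\sum_{i}\bar p_{i i_2\dots i_k}\le1$ for all $i_2,\dots,i_k$. $\mathbf{e}$ is the all-ones vector; a stochastic vector is nonnegative with entries summing to $1$. *)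

theory Defs
  imports "HOL-Analysis.Analysis"
begin

text \<open>A real tensor of order k and dimension n is represented as a function
  P :: 'n list \<Rightarrow> real on index lists, where the index type 'n is finite
  with CARD('n) = n; the entry p_{i i_2 ... i_k} is P [i, i_2, ..., i_k].
  Only lists of length k are relevant.\<close>

definition multi_indices :: "nat \<Rightarrow> ('n::finite) list set" where
  "multi_indices m = {js. length js = m}"

definition tensor_apply :: "nat \<Rightarrow> (('n::finite) list \<Rightarrow> real) \<Rightarrow> ('n \<Rightarrow> real) \<Rightarrow> 'n \<Rightarrow> real" where
  "tensor_apply k P y i = (\<Sum>js\<in>multi_indices (k - 1). P (i # js) * (\<Prod>j\<leftarrow>js. y j))"

definition columnwise_substochastic :: "nat \<Rightarrow> (('n::finite) list \<Rightarrow> real) \<Rightarrow> bool" where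
  "columnwise_substochastic k P \<longleftrightarrow>
     (\<forall>is. length is = k \<longrightarrow> 0 \<le> P is) \<and>
     (\<forall>js\<in>multi_indices (k - 1). (\<Sum>i\<in>UNIV. P (i # js)) \<le> 1)"

definition stochastic_vector :: "(('n::finite) \<Rightarrow> real) \<Rightarrow> bool" where
  "stochastic_vector v \<longleftrightarrow> (\<forall>i. 0 \<le> v i) \<and> (\<Sum>i\<in>UNIV. v i) = 1"

definition mlppr_solution :: "nat \<Rightarrow> real \<Rightarrow> (('n::finite) list \<Rightarrow> real) \<Rightarrow> ('n \<Rightarrow> real) \<Rightarrow> ('n \<Rightarrow> real) \<Rightarrow> bool" where
  "mlppr_solution k \<alpha> P v y \<longleftrightarrow>
     (\<forall>i. (\<Sum>j\<in>UNIV. y j) ^ (k - 2) * y i - \<alpha> * tensor_apply k P y i = v i)"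

end

theory Submission
  imports Defs
begin

(* Existence: on the simplex of stochastic vectors the map
   x \<mapsto> (1 - \<alpha> e^T P x^{k-1}) v + \<alpha> P x^{k-1} is continuous, so Brouwer's theorem gives a
   stochastic x with x - \<alpha> P x^{k-1} = \<mu> v, where \<mu> > 0 because e^T P x^{k-1} \<le> 1. The
   left-hand side of the MLPPR system is homogeneous of degree k - 1, so a positive multiple of x
   solves it.
   Uniqueness: normalising two nonnegative solutions to the simplex gives x - \<alpha> P x^{k-1} = \<mu> v
   and x' - \<alpha> P x'^{k-1} = \<mu>' v, say with \<mu>' \<le> \<mu>. Telescoping the products in
   P x'^{k-1} - P x^{k-1} and using the column sums of P shows that p = \<Sum>j (x'_j - x_j)^+
   satisfies p \<le> \<alpha> (k - 1) p, so p = 0. Hence x' \<le> x, and as both sum to 1, x = x' and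
   \<mu> = \<mu>', which fixes the scale of the solutions as well. *)

lemma finite_multi_indices [simp]: "finite (multi_indices m :: 'n::finite list set)"
  unfolding multi_indices_def by (rule finite_list_length)

lemma multi_indices_0: "multi_indices 0 = {[]}"
  unfolding multi_indices_def by auto

lemma sum_multi_indices_Suc:
  "(\<Sum>js\<in>multi_indices (Suc m). f js) =
     (\<Sum>j\<in>UNIV. \<Sum>js\<in>multi_indices m. f (j # (js :: 'n::finite list)))"
proof -
  have "multi_indices (Suc m) = (\<lambda>(j, js). j # js) ` (UNIV \<times> (multi_indices m :: 'n list set))"
    unfolding multi_indices_def by (auto simp: image_def length_Suc_conv)
  moreover have "inj_on (\<lambda>(j, js). j # js) (UNIV \<times> (multi_indices m :: 'n list set))"
    by (auto simp: inj_on_def)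
  ultimately show ?thesis
    by (simp add: sum.reindex sum.cartesian_product split_def)
qed

lemma sum_multi_indices_prod_list:
  fixes a :: "'n::finite \<Rightarrow> 'a::comm_semiring_1"
  shows "(\<Sum>js\<in>multi_indices m. \<Prod>j\<leftarrow>js. a j) = (\<Sum>j\<in>UNIV. a j) ^ m"
  by (induction m)
    (simp_all add: multi_indices_0 sum_multi_indices_Suc sum_distrib_left[symmetric]
      sum_distrib_right[symmetric])

lemma prod_list_map_scale:
  fixes x :: "'n \<Rightarrow> 'a::comm_monoid_mult"
  shows "(\<Prod>j\<leftarrow>js. c * x j) = c ^ length js * (\<Prod>j\<leftarrow>js. x j)"
  by (induction js) (simp_all add: ac_simps)

lemma tensor_apply_scale:
  "tensor_apply k P (\<lambda>j. c * x j) i = c ^ (k - 1) * tensor_apply k P x i"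
  unfolding tensor_apply_def multi_indices_def
  by (simp add: prod_list_map_scale sum_distrib_left ac_simps)

lemma columnwise_substochastic_nonneg:
  assumes "columnwise_substochastic k P" "1 \<le> k" "js \<in> multi_indices (k - 1)"
  shows "0 \<le> P (i # js)"
  using assms by (simp add: columnwise_substochastic_def multi_indices_def)

lemma tensor_apply_nonneg:
  assumes "columnwise_substochastic k P" "1 \<le> k" "\<And>j. 0 \<le> x j"
  shows "0 \<le> tensor_apply k P x i"
  unfolding tensor_apply_def
  using assms columnwise_substochastic_nonneg
  by (intro sum_nonneg mult_nonneg_nonneg prod_list_nonneg) auto

lemma sum_columns_weighted_le:
  fixes P :: "'n::finite list \<Rightarrow> real"
  assumes "columnwise_substochastic k P" "1 \<le> k" "\<And>js. 0 \<le> f js"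
  shows "(\<Sum>i\<in>UNIV. \<Sum>js\<in>multi_indices (k - 1). P (i # js) * f js)
           \<le> (\<Sum>js\<in>multi_indices (k - 1). f js)"
proof -
  have "(\<Sum>i\<in>UNIV. \<Sum>js\<in>multi_indices (k - 1). P (i # js) * f js)
          = (\<Sum>js\<in>multi_indices (k - 1). (\<Sum>i\<in>UNIV. P (i # js)) * f js)"
    by (simp add: sum.swap[of _ UNIV] sum_distrib_right)
  also have "\<dots> \<le> (\<Sum>js\<in>multi_indices (k - 1). f js)"
    using assms columnwise_substochastic_nonneg[OF assms(1,2)]
    by (intro sum_mono mult_left_le_one_le sum_nonneg) (auto simp: columnwise_substochastic_def)
  finally show ?thesis .
qed

lemma sum_tensor_apply_le:
  fixes P :: "'n::finite list \<Rightarrow> real"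
  assumes "columnwise_substochastic k P" "1 \<le> k" "\<And>j. 0 \<le> x j"
  shows "(\<Sum>i\<in>UNIV. tensor_apply k P x i) \<le> (\<Sum>j\<in>UNIV. x j) ^ (k - 1)"
proof -
  have "0 \<le> (\<Prod>j\<leftarrow>js. x j)" for js
    using assms(3) by (intro prod_list_nonneg) auto
  then show ?thesis
    using sum_columns_weighted_le[OF assms(1,2), of "\<lambda>js. \<Prod>j\<leftarrow>js. x j"]
    by (simp add: tensor_apply_def sum_multi_indices_prod_list)
qed

(* Telescoping \<Prod>b - \<Prod>a along js, with every difference b j - a j replaced by its positive part. *)
fun prod_diff_majorant :: "('n \<Rightarrow> real) \<Rightarrow> ('n \<Rightarrow> real) \<Rightarrow> 'n list \<Rightarrow> real" where
  "prod_diff_majorant a b [] = 0"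
| "prod_diff_majorant a b (j # js) =
     max 0 (b j - a j) * (\<Prod>l\<leftarrow>js. a l) + b j * prod_diff_majorant a b js"

lemma prod_diff_majorant_nonneg:
  assumes "\<And>j. 0 \<le> a j" "\<And>j. 0 \<le> b j"
  shows "0 \<le> prod_diff_majorant a b js"
proof (induction js)
  case (Cons j js)
  have "0 \<le> (\<Prod>l\<leftarrow>js. a l)"
    using assms by (intro prod_list_nonneg) auto
  with Cons assms show ?case by simp
qed simp

lemma prod_list_diff_le_majorant:
  assumes "\<And>j. 0 \<le> a j" "\<And>j. 0 \<le> b j"
  shows "(\<Prod>j\<leftarrow>js. b j) - (\<Prod>j\<leftarrow>js. a j) \<le> prod_diff_majorant a b js"
proof (induction js)
  case Nil
  then show ?case by simp
next
  case (Cons j js)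
  have "(\<Prod>l\<leftarrow>j # js. b l) - (\<Prod>l\<leftarrow>j # js. a l)
      = b j * ((\<Prod>l\<leftarrow>js. b l) - (\<Prod>l\<leftarrow>js. a l)) + (b j - a j) * (\<Prod>l\<leftarrow>js. a l)"
    by (simp add: algebra_simps)
  also have "\<dots> \<le> b j * prod_diff_majorant a b js + max 0 (b j - a j) * (\<Prod>l\<leftarrow>js. a l)"
    using Cons assms by (intro add_mono mult_left_mono mult_right_mono prod_list_nonneg) auto
  finally show ?case by simp
qed

lemma sum_prod_diff_majorant:
  fixes a b :: "'n::finite \<Rightarrow> real"
  assumes "(\<Sum>j\<in>UNIV. a j) = 1" "(\<Sum>j\<in>UNIV. b j) = 1"
  shows "(\<Sum>js\<in>multi_indices m. prod_diff_majorant a b js)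
           = real m * (\<Sum>j\<in>UNIV. max 0 (b j - a j))"
proof (induction m)
  case 0
  then show ?case by (simp add: multi_indices_0)
next
  case (Suc m)
  then show ?case
    using assms
    by (simp add: sum_multi_indices_Suc sum_multi_indices_prod_list sum.distrib
        sum_distrib_left[symmetric] sum_distrib_right[symmetric] algebra_simps)
qed

lemma tensor_apply_diff_le:
  assumes "columnwise_substochastic k P" "1 \<le> k" "\<And>j. 0 \<le> a j" "\<And>j. 0 \<le> b j"
  shows "tensor_apply k P b i - tensor_apply k P a i
           \<le> (\<Sum>js\<in>multi_indices (k - 1). P (i # js) * prod_diff_majorant a b js)"
proof -
  have "tensor_apply k P b i - tensor_apply k P a i
      = (\<Sum>js\<in>multi_indices (k - 1). P (i # js) * ((\<Prod>j\<leftarrow>js. b j) - (\<Prod>j\<leftarrow>js. a j)))"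
    unfolding tensor_apply_def by (simp add: sum_subtractf algebra_simps)
  also have "\<dots> \<le> (\<Sum>js\<in>multi_indices (k - 1). P (i # js) * prod_diff_majorant a b js)"
    using assms columnwise_substochastic_nonneg
    by (intro sum_mono mult_left_mono prod_list_diff_le_majorant) auto
  finally show ?thesis .
qed

lemma sum_pos_part_diff_le:
  fixes P :: "'n::finite list \<Rightarrow> real"
  assumes cs: "columnwise_substochastic k P" and k: "1 \<le> k"
    and v: "stochastic_vector v" and x: "stochastic_vector x" and x': "stochastic_vector x'"
    and \<alpha>: "0 \<le> \<alpha>" and "\<mu>' \<le> \<mu>"
    and sol: "\<And>i. x i - \<alpha> * tensor_apply k P x i = \<mu> * v i"
    and sol': "\<And>i. x' i - \<alpha> * tensor_apply k P x' i = \<mu>' * v i"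
  shows "(\<Sum>j\<in>UNIV. max 0 (x' j - x j))
           \<le> \<alpha> * real (k - 1) * (\<Sum>j\<in>UNIV. max 0 (x' j - x j))"
proof -
  define H where "H i = (\<Sum>js\<in>multi_indices (k - 1). P (i # js) * prod_diff_majorant x x' js)" for i
  have x0: "\<And>j. 0 \<le> x j" and x'0: "\<And>j. 0 \<le> x' j" and v0: "\<And>j. 0 \<le> v j"
    using x x' v by (simp_all add: stochastic_vector_def)
  have majorant_nonneg: "0 \<le> prod_diff_majorant x x' js" for js
    using x0 x'0 by (rule prod_diff_majorant_nonneg)
  have "max 0 (x' i - x i) \<le> \<alpha> * H i" for i
  proof -
    have "x' i - x i = \<alpha> * (tensor_apply k P x' i - tensor_apply k P x i) - (\<mu> - \<mu>') * v i"
      using sol[of i] sol'[of i] by (simp add: algebra_simps)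
    also have "\<dots> \<le> \<alpha> * (tensor_apply k P x' i - tensor_apply k P x i)"
      using \<open>\<mu>' \<le> \<mu>\<close> v0[of i] by simp
    also have "\<dots> \<le> \<alpha> * H i"
      unfolding H_def using tensor_apply_diff_le[OF cs k, of x x' i] x0 x'0 \<alpha>
      by (intro mult_left_mono) auto
    finally have "x' i - x i \<le> \<alpha> * H i" .
    moreover have "0 \<le> H i"
      unfolding H_def using columnwise_substochastic_nonneg[OF cs k] majorant_nonneg
      by (intro sum_nonneg mult_nonneg_nonneg) auto
    ultimately show ?thesis
      using \<alpha> by simp
  qed
  then have "(\<Sum>j\<in>UNIV. max 0 (x' j - x j)) \<le> \<alpha> * (\<Sum>i\<in>UNIV. H i)"
    unfolding sum_distrib_left by (rule sum_mono)
  also have "\<dots> \<le> \<alpha> * (real (k - 1) * (\<Sum>j\<in>UNIV. max 0 (x' j - x j)))"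
  proof (rule mult_left_mono[OF _ \<alpha>])
    show "(\<Sum>i\<in>UNIV. H i) \<le> real (k - 1) * (\<Sum>j\<in>UNIV. max 0 (x' j - x j))"
      using sum_columns_weighted_le[OF cs k, of "prod_diff_majorant x x'"] majorant_nonneg
        sum_prod_diff_majorant[of x x' "k - 1"] x x'
      unfolding H_def by (simp add: stochastic_vector_def)
  qed
  finally show ?thesis
    by (simp only: mult.assoc)
qed

lemma stochastic_solution_unique_le:
  fixes P :: "'n::finite list \<Rightarrow> real"
  assumes cs: "columnwise_substochastic k P" and k: "1 \<le> k"
    and v: "stochastic_vector v" and x: "stochastic_vector x" and x': "stochastic_vector x'"
    and \<alpha>: "0 \<le> \<alpha>" "\<alpha> * real (k - 1) < 1" and "\<mu>' \<le> \<mu>"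
    and sol: "\<And>i. x i - \<alpha> * tensor_apply k P x i = \<mu> * v i"
    and sol': "\<And>i. x' i - \<alpha> * tensor_apply k P x' i = \<mu>' * v i"
  shows "x = x'"
proof -
  define p where "p = (\<Sum>j\<in>UNIV. max 0 (x' j - x j))"
  have p_le: "p \<le> (\<alpha> * real (k - 1)) * p"
    unfolding p_def by (rule sum_pos_part_diff_le[OF cs k v x x' \<alpha>(1) \<open>\<mu>' \<le> \<mu>\<close> sol sol'])
  have "p = 0"
  proof (rule ccontr)
    assume "p \<noteq> 0"
    then have "0 < p"
      unfolding p_def by (simp add: sum_nonneg order_le_neq_trans)
    then have "(\<alpha> * real (k - 1)) * p < 1 * p"
      using \<alpha>(2) by (rule mult_strict_right_mono[rotated])
    with p_le show False by simp
  qed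
  then have le: "x' j \<le> x j" for j
    unfolding p_def by (simp add: sum_nonneg_eq_0_iff) (metis max.absorb_iff1 diff_le_0_iff_le)
  have "(\<Sum>j\<in>UNIV. x' j) = (\<Sum>j\<in>UNIV. x j)"
    using x x' by (simp add: stochastic_vector_def)
  then have "x' j = x j" for j
    using le by (rule sum_mono_inv) simp_all
  then show "x = x'"
    by auto
qed

lemma stochastic_solution_unique:
  fixes P :: "'n::finite list \<Rightarrow> real"
  assumes cs: "columnwise_substochastic k P" and k: "1 \<le> k"
    and v: "stochastic_vector v" and x: "stochastic_vector x" and x': "stochastic_vector x'"
    and \<alpha>: "0 \<le> \<alpha>" "\<alpha> * real (k - 1) < 1"
    and sol: "\<And>i. x i - \<alpha> * tensor_apply k P x i = \<mu> * v i"
    and sol': "\<And>i. x' i - \<alpha> * tensor_apply k P x' i = \<mu>' * v i"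
  shows "x = x' \<and> \<mu> = \<mu>'"
proof -
  have "x = x'"
  proof (cases "\<mu>' \<le> \<mu>")
    case True
    show ?thesis by (rule stochastic_solution_unique_le[OF cs k v x x' \<alpha> True sol sol'])
  next
    case False
    then have "\<mu> \<le> \<mu>'" by simp
    from stochastic_solution_unique_le[OF cs k v x' x \<alpha> this sol' sol] show ?thesis ..
  qed
  then have "\<mu> * v i = \<mu>' * v i" for i
    using sol[of i] sol'[of i] by auto
  then have "\<mu> * (\<Sum>i\<in>UNIV. v i) = \<mu>' * (\<Sum>i\<in>UNIV. v i)"
    unfolding sum_distrib_left by (intro sum.cong refl)
  with v \<open>x = x'\<close> show ?thesis
    by (simp add: stochastic_vector_def)
qed

lemma continuous_on_tensor_apply:
  "continuous_on S (\<lambda>z::real^'n::finite. tensor_apply k P (\<lambda>j. z $ j) i)"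
proof -
  have "continuous_on S (\<lambda>z::real^'n. \<Prod>j\<leftarrow>js. z $ j)" for js
    by (induction js) (auto intro!: continuous_intros)
  then show ?thesis
    unfolding tensor_apply_def by (intro continuous_intros)
qed

(* Brouwer's theorem needs a Euclidean space, so the simplex is taken inside real^'n. *)
lemma stochastic_vectors_fixed_point:
  fixes f :: "real^'n::finite \<Rightarrow> real^'n"
  assumes "continuous_on {z. stochastic_vector (\<lambda>i. z $ i)} f"
    and "f \<in> {z. stochastic_vector (\<lambda>i. z $ i)} \<rightarrow> {z. stochastic_vector (\<lambda>i. z $ i)}"
  obtains z where "stochastic_vector (\<lambda>i. z $ i)" "f z = z"
proof -
  define S where "S = {z::real^'n. stochastic_vector (\<lambda>i. z $ i)}"
  have "S = {z. \<forall>i. 0 \<le> z $ i} \<inter> {z. (\<Sum>i\<in>UNIV. z $ i) = 1}"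
    unfolding S_def stochastic_vector_def by auto
  moreover have "closed {z::real^'n. (\<Sum>i\<in>UNIV. z $ i) = 1}"
    by (intro closed_Collect_eq continuous_intros)
  ultimately have "closed S"
    using closed_positive_orthant by auto
  moreover have "bounded S"
    unfolding bounded_iff
  proof (intro exI ballI)
    fix z assume "z \<in> S"
    then show "norm z \<le> 1"
      using norm_le_l1_cart[of z] unfolding S_def stochastic_vector_def by simp
  qed
  ultimately have "compact S"
    by (simp add: compact_eq_bounded_closed)
  moreover have "convex S"
    unfolding convex_def S_def stochastic_vector_def
    by (auto simp: sum.distrib sum_distrib_left[symmetric])
  moreover have "(\<chi> i. 1 / real CARD('n)) \<in> S"
    unfolding S_def stochastic_vector_def by simp
  ultimately show ?thesis
    using brouwer[of S f] assms that unfolding S_def by blast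
qed

lemma stochastic_pagerank_fixed_point:
  fixes P :: "'n::finite list \<Rightarrow> real"
  assumes cs: "columnwise_substochastic k P" and k: "1 \<le> k"
    and v: "stochastic_vector v" and \<alpha>: "0 \<le> \<alpha>" "\<alpha> \<le> 1"
  obtains x where "stochastic_vector x"
    "\<And>i. x i - \<alpha> * tensor_apply k P x i = (1 - \<alpha> * (\<Sum>l\<in>UNIV. tensor_apply k P x l)) * v i"
proof -
  define F where "F z = (\<chi> i. (1 - \<alpha> * (\<Sum>l\<in>UNIV. tensor_apply k P (\<lambda>j. z $ j) l)) * v i
                              + \<alpha> * tensor_apply k P (\<lambda>j. z $ j) i)" for z :: "real^'n"
  have "continuous_on {z. stochastic_vector (\<lambda>i. z $ i)} F"
    unfolding F_def by (intro continuous_intros continuous_on_tensor_apply)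
  moreover have "F \<in> {z. stochastic_vector (\<lambda>i. z $ i)} \<rightarrow> {z. stochastic_vector (\<lambda>i. z $ i)}"
  proof
    fix z :: "real^'n"
    assume "z \<in> {z. stochastic_vector (\<lambda>i. z $ i)}"
    then have z0: "\<And>j. 0 \<le> z $ j" and z1: "(\<Sum>j\<in>UNIV. z $ j) = 1"
      by (simp_all add: stochastic_vector_def)
    define T where "T i = tensor_apply k P (\<lambda>j. z $ j) i" for i
    have T0: "0 \<le> T i" for i
      unfolding T_def using cs k z0 by (rule tensor_apply_nonneg)
    have "(\<Sum>i\<in>UNIV. T i) \<le> 1"
      unfolding T_def using sum_tensor_apply_le[OF cs k, of "\<lambda>j. z $ j"] z0 z1 by simp
    then have "\<alpha> * (\<Sum>i\<in>UNIV. T i) \<le> 1"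
      using \<alpha> T0 by (intro mult_le_one sum_nonneg) auto
    moreover have "(\<Sum>i\<in>UNIV. (1 - \<alpha> * (\<Sum>l\<in>UNIV. T l)) * v i + \<alpha> * T i) = 1"
      using v by (simp add: stochastic_vector_def sum.distrib sum_distrib_left[symmetric])
    ultimately show "F z \<in> {z. stochastic_vector (\<lambda>i. z $ i)}"
      using v T0 \<alpha>(1) unfolding F_def T_def[symmetric]
      by (simp add: stochastic_vector_def)
  qed
  ultimately obtain z where z: "stochastic_vector (\<lambda>i. z $ i)" "F z = z"
    by (rule stochastic_vectors_fixed_point)
  show ?thesis
  proof (rule that[OF z(1)])
    fix i
    have "z $ i = F z $ i"
      using z(2) by simp
    then show "z $ i - \<alpha> * tensor_apply k P (\<lambda>j. z $ j) i
                 = (1 - \<alpha> * (\<Sum>l\<in>UNIV. tensor_apply k P (\<lambda>j. z $ j) l)) * v i"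
      unfolding F_def by simp
  qed
qed

lemma mlppr_solution_scaled_iff:
  fixes P :: "'n::finite list \<Rightarrow> real"
  assumes k: "2 \<le> k" and s: "0 < s" and x: "(\<Sum>j\<in>UNIV. x j) = 1"
  shows "mlppr_solution k \<alpha> P v (\<lambda>j. s * x j) \<longleftrightarrow>
           (\<forall>i. x i - \<alpha> * tensor_apply k P x i = v i / s ^ (k - 1))"
proof -
  have sum_sx: "(\<Sum>j\<in>UNIV. s * x j) = s"
    by (simp add: sum_distrib_left[symmetric] x)
  have "k - 1 = Suc (k - 2)"
    using k by simp
  then have "s ^ (k - 2) * (s * x i) - \<alpha> * tensor_apply k P (\<lambda>j. s * x j) i
               = s ^ (k - 1) * (x i - \<alpha> * tensor_apply k P x i)" for i
    by (simp add: tensor_apply_scale algebra_simps)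
  moreover have "s ^ (k - 1) \<noteq> 0"
    using s by simp
  ultimately show ?thesis
    unfolding mlppr_solution_def sum_sx by (simp add: eq_divide_eq ac_simps)
qed

lemma mlppr_solution_normalize:
  fixes P :: "'n::finite list \<Rightarrow> real"
  assumes k: "2 \<le> k" and v: "stochastic_vector v"
    and y0: "\<forall>i. 0 \<le> y i" and sol: "mlppr_solution k \<alpha> P v y"
  obtains s x where "0 < s" "stochastic_vector x" "y = (\<lambda>j. s * x j)"
    "\<And>i. x i - \<alpha> * tensor_apply k P x i = v i / s ^ (k - 1)"
proof -
  define s where "s = (\<Sum>j\<in>UNIV. y j)"
  have "s \<noteq> 0"
  proof
    assume "s = 0"
    then have y_zero: "y = (\<lambda>j. 0)"
      using y0 unfolding s_def by (auto simp: sum_nonneg_eq_0_iff)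
    have "tensor_apply k P (\<lambda>j. 0) i = 0" for i
      using tensor_apply_scale[of k P 0 "\<lambda>j. 0" i] k by (simp add: power_0_left)
    then have "v i = 0" for i
      using sol unfolding y_zero by (simp add: mlppr_solution_def)
    with v show False
      by (simp add: stochastic_vector_def)
  qed
  moreover have "0 \<le> s"
    unfolding s_def using y0 by (simp add: sum_nonneg)
  ultimately have s: "0 < s"
    by simp
  define x where "x j = y j / s" for j
  have x: "stochastic_vector x"
    using s y0 unfolding stochastic_vector_def x_def s_def by (simp add: sum_divide_distrib[symmetric])
  have y: "y = (\<lambda>j. s * x j)"
    using s unfolding x_def by simp
  show ?thesis
    using that[OF s x y] sol mlppr_solution_scaled_iff[OF k s, of x \<alpha> P v] x y
    by (simp add: stochastic_vector_def)
qed

lemma mlppr_solution_exists: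
  fixes P :: "'n::finite list \<Rightarrow> real"
  assumes k: "2 \<le> k" and cs: "columnwise_substochastic k P"
    and v: "stochastic_vector v" and \<alpha>: "0 \<le> \<alpha>" "\<alpha> < 1"
  shows "\<exists>y. (\<forall>i. 0 \<le> y i) \<and> mlppr_solution k \<alpha> P v y"
proof -
  from k have k1: "1 \<le> k" by simp
  obtain x where x: "stochastic_vector x"
    and fix_x: "\<And>i. x i - \<alpha> * tensor_apply k P x i = (1 - \<alpha> * (\<Sum>l\<in>UNIV. tensor_apply k P x l)) * v i"
    using stochastic_pagerank_fixed_point[OF cs k1 v \<alpha>(1) less_imp_le[OF \<alpha>(2)]] by blast
  define \<mu> where "\<mu> = 1 - \<alpha> * (\<Sum>l\<in>UNIV. tensor_apply k P x l)"
  have "(\<Sum>l\<in>UNIV. tensor_apply k P x l) \<le> 1"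
    using sum_tensor_apply_le[OF cs k1, of x] x by (simp add: stochastic_vector_def)
  then have "\<alpha> * (\<Sum>l\<in>UNIV. tensor_apply k P x l) \<le> \<alpha>"
    using \<alpha>(1) by (simp add: mult_left_le)
  then have \<mu>: "0 < \<mu>"
    unfolding \<mu>_def using \<alpha>(2) by simp
  define s where "s = root (k - 1) (1 / \<mu>)"
  have "0 < k - 1" and "0 < 1 / \<mu>"
    using k \<mu> by simp_all
  then have s: "0 < s" and s_pow: "s ^ (k - 1) = 1 / \<mu>"
    unfolding s_def by (rule real_root_gt_zero, rule real_root_pow_pos)
  have "x i - \<alpha> * tensor_apply k P x i = v i / s ^ (k - 1)" for i
    using fix_x[of i] unfolding s_pow \<mu>_def by simp
  moreover have "(\<Sum>j\<in>UNIV. x j) = 1"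
    using x by (simp add: stochastic_vector_def)
  ultimately have "mlppr_solution k \<alpha> P v (\<lambda>j. s * x j)"
    using mlppr_solution_scaled_iff[OF k s] by blast
  moreover have "\<forall>i. 0 \<le> s * x i"
    using s x by (simp add: stochastic_vector_def)
  ultimately show ?thesis
    by (intro exI[of _ "\<lambda>j. s * x j"]) simp
qed

lemma mlppr_solution_unique:
  fixes P :: "'n::finite list \<Rightarrow> real"
  assumes k: "2 \<le> k" and cs: "columnwise_substochastic k P"
    and v: "stochastic_vector v" and \<alpha>: "0 \<le> \<alpha>" "\<alpha> * real (k - 1) < 1"
    and y: "\<forall>i. 0 \<le> y i" "mlppr_solution k \<alpha> P v y"
    and y': "\<forall>i. 0 \<le> y' i" "mlppr_solution k \<alpha> P v y'"
  shows "y = y'"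
proof -
  from k have k1: "1 \<le> k" by simp
  obtain s x where s: "0 < s" and x: "stochastic_vector x" and y_eq: "y = (\<lambda>j. s * x j)"
    and sol: "\<And>i. x i - \<alpha> * tensor_apply k P x i = v i / s ^ (k - 1)"
    using mlppr_solution_normalize[OF k v y] by metis
  obtain s' x' where s': "0 < s'" and x': "stochastic_vector x'" and y'_eq: "y' = (\<lambda>j. s' * x' j)"
    and sol': "\<And>i. x' i - \<alpha> * tensor_apply k P x' i = v i / s' ^ (k - 1)"
    using mlppr_solution_normalize[OF k v y'] by metis
  have "x = x'" and "1 / s ^ (k - 1) = 1 / s' ^ (k - 1)"
    using stochastic_solution_unique[OF cs k1 v x x' \<alpha>, of "1 / s ^ (k - 1)" "1 / s' ^ (k - 1)"]
      sol sol' by simp_all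
  moreover from this(2) have "s = s'"
    using s s' k by (simp add: power_eq_iff_eq_base)
  ultimately show ?thesis
    unfolding y_eq y'_eq by simp
qed

theorem corollary3p16:
  fixes k :: nat and P :: "('n::finite) list \<Rightarrow> real" and v :: "'n \<Rightarrow> real" and \<alpha> :: real
  assumes "k \<ge> 2"
    and "columnwise_substochastic k P"
    and "stochastic_vector v"
    and "0 \<le> \<alpha>" and "\<alpha> < 1"
    and "\<alpha> < 1 / (real k - 1)"
  shows "\<exists>!y. (\<forall>i. 0 \<le> y i) \<and> mlppr_solution k \<alpha> P v y"
proof (rule ex_ex1I)
  show "\<exists>y. (\<forall>i. 0 \<le> y i) \<and> mlppr_solution k \<alpha> P v y"
    by (rule mlppr_solution_exists[OF assms(1-5)])
next
  have "\<alpha> * real (k - 1) < 1"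
    using assms(1,6) by (simp add: of_nat_diff pos_less_divide_eq)
  then show "y = y'" if "(\<forall>i. 0 \<le> y i) \<and> mlppr_solution k \<alpha> P v y"
    and "(\<forall>i. 0 \<le> y' i) \<and> mlppr_solution k \<alpha> P v y'" for y y'
    using mlppr_solution_unique[OF assms(1-4)] that by blast
qed

end
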